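(* For $n\in\mathbb{N}$ let $f_n(z)=\big(\frac{z-1}{z+1}\big)^n$, $z\in\mathbb{C}_+$. Then $f_n\in\mathcal{B}$ and $\|f_n\|_{\mathcal{B}}\le3+2\log(2n)$ for each $n\in\mathbb{N}$.
   Context: $\mathbb{C}_+=\{\Re z>0\}$. $\mathcal{B}$ is the space of holomorphic $f$ on $\mathbb{C}_+$ with $\int_0^\infty\sup_{y}|f'(x+iy)|dx<\infty$, normed by $\|f\|_{\mathcal{B}}=\sup_{\mathbb{C}_+}|f|+\int_0^\infty\sup_{y\in\mathbb{R}}|f'(x+iy)|\,dx$. *)

theory Defs
  imports "HOL-Analysis.Analysis"
begin

definition cplus :: "complex set" where
  "cplus = {z. Re z > 0}"

definition sup_deriv :: "(complex \<Rightarrow> complex) \<Rightarrow> real \<Rightarrow> real" where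
  "sup_deriv f x = (SUP y::real. norm (deriv f (Complex x y)))"

definition in_B :: "(complex \<Rightarrow> complex) \<Rightarrow> bool" where
  "in_B f \<longleftrightarrow> f holomorphic_on cplus
     \<and> bounded (f ` cplus)
     \<and> (\<forall>x>0. bdd_above (range (\<lambda>y::real. norm (deriv f (Complex x y)))))
     \<and> sup_deriv f integrable_on {0<..}"

definition B_norm :: "(complex \<Rightarrow> complex) \<Rightarrow> real" where
  "B_norm f = (SUP z\<in>cplus. norm (f z)) + integral {0<..} (sup_deriv f)"

end

theory Submission
  imports Defs "HOL-Complex_Analysis.Cauchy_Integral_Formula" "HOL-Real_Asymp.Real_Asymp"
begin

text \<open>
  On the right half-plane \<open>|z - 1| \<le> |z + 1|\<close>, so \<open>|f\<^sub>n| \<le> 1\<close>. With \<open>x = Re z\<close> and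
  \<open>r = |z - 1| / |z + 1|\<close> one has \<open>|z + 1|\<^sup>2 (1 - r\<^sup>2) = 4x\<close>, and the Bernoulli-type
  inequality \<open>r\<^sup>k (1 + k (1 - r)) \<le> 1\<close> turns \<open>|f\<^sub>n'(z)| = 2n r\<^sup>n\<^sup>-\<^sup>1 / |z + 1|\<^sup>2\<close> into the
  bound \<open>2n / (x\<^sup>2 + 2nx + 1)\<close>, uniformly in \<open>Im z\<close>. This is at most \<open>2n / ((x + a)(x + b))\<close>
  with \<open>a = 1/(2n)\<close>, \<open>b = 2n - 1/(2n)\<close>, whose integral over \<open>(0, \<infinity>)\<close> is
  \<open>2n log(b/a) / (b - a) \<le> 2 + 2 log(2n)\<close>. The vertical suprema of \<open>|f'|\<close> are measurable
  in \<open>x\<close> because, by continuity, they are suprema over rational \<open>y\<close>.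
\<close>

lemma has_integral_inverse_shifted_product:
  fixes a b :: real
  assumes "0 < a" "a < b"
  shows "((\<lambda>x. 1 / ((x + a) * (x + b))) has_integral ln (b / a) / (b - a)) {0<..}"
proof -
  define F where "F x = (ln (x + a) - ln (x + b)) / (b - a)" for x :: real
  have F_deriv: "(F has_real_derivative 1 / ((x + a) * (x + b))) (at x)" if "0 < x" for x
  proof -
    have "1 / (x + a) - 1 / (x + b) = (b - a) / ((x + a) * (x + b))"
      using that assms by (simp add: field_simps)
    then have "(1 / (x + a) - 1 / (x + b)) / (b - a) = 1 / ((x + a) * (x + b))"
      using assms by simp
    then show ?thesis
      unfolding F_def using that assms by (auto intro!: derivative_eq_intros)
  qed
  have F_0: "((F \<circ> real_of_ereal) \<longlongrightarrow> (ln a - ln b) / (b - a)) (at_right 0)"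
    unfolding zero_ereal_def ereal_tendsto_simps F_def
    using assms by (auto intro!: tendsto_eq_intros)
  have F_infinity: "((F \<circ> real_of_ereal) \<longlongrightarrow> 0) (at_left \<infinity>)"
    unfolding ereal_tendsto_simps F_def using assms by real_asymp
  have einterval: "einterval 0 \<infinity> = {0::real<..}"
    by (auto simp: einterval_def zero_ereal_def)
  have "set_integrable lborel (einterval 0 \<infinity>) (\<lambda>x. 1 / ((x + a) * (x + b)))"
    and "(LBINT x=0..\<infinity>. 1 / ((x + a) * (x + b))) = 0 - (ln a - ln b) / (b - a)"
    by (rule interval_integral_FTC_nonneg[OF _ _ _ _ F_0 F_infinity];
        use assms F_deriv in \<open>auto simp: zero_ereal_def\<close>)+
  then have integrable: "set_integrable lborel {0<..} (\<lambda>x. 1 / ((x + a) * (x + b)))"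
    and integral: "(LBINT x:{0<..}. 1 / ((x + a) * (x + b))) = ln (b / a) / (b - a)"
    using assms by (simp_all add: einterval interval_lebesgue_integral_0_infty ln_div diff_divide_distrib)
  show ?thesis
    using set_borel_integral_eq_integral[OF integrable] integral by (simp add: has_integral_integral)
qed

lemma scaled_log_ratio_le:
  fixes t :: real
  assumes "0 < t" "2 < t\<^sup>2"
  shows "t * (ln ((t - 1 / t) / (1 / t)) / (t - 1 / t - 1 / t)) \<le> 2 + 2 * ln t"
    (is "?lhs \<le> _")
proof -
  define m where "m = t\<^sup>2 - 2"
  have "0 < m"
    using assms by (simp add: m_def)
  have "ln (m + 1) \<le> ln (t\<^sup>2)"
    using \<open>0 < m\<close> by (intro ln_mono) (simp_all add: m_def)
  then have ln_le: "ln (m + 1) \<le> 2 * ln t"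
    using assms by (simp add: ln_realpow)
  have ratio_le: "ln (m + 1) / m \<le> 1"
    using ln_le_minus_one[of "m + 1"] \<open>0 < m\<close> by (simp add: divide_le_eq)
  have "(t - 1 / t) / (1 / t) = m + 1" and "t - 1 / t - 1 / t = m / t"
    using assms by (simp_all add: m_def power2_eq_square field_simps)
  then have "?lhs = (m + 2) * ln (m + 1) / m"
    using assms by (simp add: m_def power2_eq_square)
  also have "\<dots> = ln (m + 1) + 2 * (ln (m + 1) / m)"
    using \<open>0 < m\<close> by (simp add: field_simps)
  also have "\<dots> \<le> 2 * ln t + 2 * 1"
    using ln_le ratio_le by linarith
  finally show ?thesis
    by simp
qed

text \<open>The shifted product has distinct roots even for \<open>t = 2\<close>, where \<open>x\<^sup>2 + tx + 1 = (x + 1)\<^sup>2\<close>.\<close>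

lemma divide_quadratic_le_divide_shifted_product:
  fixes x t :: real
  assumes "0 < x" "0 < t" "2 < t\<^sup>2"
  shows "t / (x\<^sup>2 + t * x + 1) \<le> t * (1 / ((x + 1 / t) * (x + (t - 1 / t))))"
proof -
  have "(x + 1 / t) * (x + (t - 1 / t)) = x\<^sup>2 + t * x + 1 - 1 / t\<^sup>2"
    using assms by (simp add: power2_eq_square field_simps)
  then have le: "(x + 1 / t) * (x + (t - 1 / t)) \<le> x\<^sup>2 + t * x + 1"
    by simp
  have pos: "0 < (x + 1 / t) * (x + (t - 1 / t))"
    using assms by (intro mult_pos_pos add_pos_pos) (simp_all add: field_simps power2_eq_square)
  have "t / (x\<^sup>2 + t * x + 1) \<le> t / ((x + 1 / t) * (x + (t - 1 / t)))"
    by (rule divide_left_mono[OF le]) (use assms(2) le pos in \<open>auto intro: mult_pos_pos\<close>)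
  then show ?thesis
    by simp
qed

lemma power_mult_Bernoulli_le_one:
  fixes r :: real
  assumes "0 \<le> r" "r \<le> 1"
  shows "r ^ k * (1 + k * (1 - r)) \<le> 1"
proof (induction k)
  case (Suc k)
  have "r ^ Suc k * (1 + Suc k * (1 - r)) = r * (r ^ k * (1 + k * (1 - r))) + (1 - r) * r ^ Suc k"
    by (simp add: algebra_simps)
  also have "\<dots> \<le> r * 1 + (1 - r) * 1"
    using Suc assms by (intro add_mono mult_left_mono power_le_one) auto
  finally show ?case by simp
qed simp

lemma norm_plus_one_sq_minus_norm_minus_one_sq:
  fixes z :: complex
  shows "(norm (z + 1))\<^sup>2 - (norm (z - 1))\<^sup>2 = 4 * Re z"
  unfolding cmod_power2 by (simp add: power2_eq_square algebra_simps)

lemma norm_minus_one_le_norm_plus_one: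
  fixes z :: complex
  assumes "0 \<le> Re z"
  shows "norm (z - 1) \<le> norm (z + 1)"
proof (rule power2_le_imp_le)
  show "(norm (z - 1))\<^sup>2 \<le> (norm (z + 1))\<^sup>2"
    using norm_plus_one_sq_minus_norm_minus_one_sq[of z] assms by linarith
qed simp

lemma cSUP_eq_cSUP_Rats:
  fixes h :: "real \<Rightarrow> real"
  assumes "continuous_on UNIV h" and bdd: "bdd_above (range h)"
  shows "(SUP y. h y) = (SUP y\<in>\<rat>. h y)"
proof (rule antisym)
  define S where "S = (SUP y\<in>\<rat>. h y)"
  have "bdd_above (h ` \<rat>)"
    using bdd by (meson bdd_above_mono image_mono subset_UNIV)
  then have "\<rat> \<subseteq> {y. h y \<le> S}"
    by (auto simp: S_def intro: cSUP_upper)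
  moreover have "closed {y. h y \<le> S}"
    using assms(1) by (intro closed_Collect_le continuous_on_const)
  ultimately have "closure \<rat> \<subseteq> {y. h y \<le> S}"
    by (rule closure_minimal)
  then show "(SUP y. h y) \<le> S"
    by (intro cSUP_least) (auto simp: Rats_closure_real)
next
  show "(SUP y\<in>\<rat>. h y) \<le> (SUP y. h y)"
    using bdd Rats_0 by (intro cSUP_subset_mono) auto
qed

lemma Complex_in_cplus_iff [simp]: "Complex x y \<in> cplus \<longleftrightarrow> 0 < x"
  by (simp add: cplus_def)

lemma open_cplus: "open cplus"
  by (simp add: cplus_def open_halfspace_Re_gt)

lemma Cayley_power_has_field_derivative:
  fixes z :: complex
  assumes "z \<noteq> -1"
  shows "((\<lambda>z. ((z - 1) / (z + 1)) ^ n) has_field_derivative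
           of_nat n * ((z - 1) / (z + 1)) ^ (n - 1) * (2 / (z + 1)\<^sup>2)) (at z)"
proof -
  have "z + 1 \<noteq> 0"
    using assms by (simp add: add_eq_0_iff2)
  then show ?thesis
    by (auto intro!: derivative_eq_intros simp: power2_eq_square)
qed

lemma norm_Cayley_power_derivative_le:
  fixes z :: complex
  assumes "0 < Re z"
  shows "norm (of_nat n * ((z - 1) / (z + 1)) ^ (n - 1) * (2 / (z + 1)\<^sup>2))
           \<le> 2 * n / ((Re z)\<^sup>2 + 2 * n * Re z + 1)"
proof (cases n)
  case (Suc k)
  define x u v where "x = Re z" and "u = norm (z - 1)" and "v = norm (z + 1)"
  define r where "r = u / v"
  have "0 < x" "0 \<le> u"
    using assms by (simp_all add: x_def u_def)
  moreover have "u \<le> v"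
    using assms by (simp add: u_def v_def norm_minus_one_le_norm_plus_one)
  moreover have "(x + 1)\<^sup>2 \<le> v\<^sup>2"
    unfolding x_def v_def by (simp add: cmod_power2)
  ultimately have "0 < v" and r: "0 \<le> r" "r \<le> 1" and v_ge: "(x + 1)\<^sup>2 \<le> v\<^sup>2"
    by (auto simp: r_def)
  have "u = r * v"
    using \<open>0 < v\<close> by (simp add: r_def)
  then have "4 * x = v\<^sup>2 * (1 - r\<^sup>2)"
    using norm_plus_one_sq_minus_norm_minus_one_sq[of z]
    by (simp add: x_def u_def v_def power_mult_distrib algebra_simps)
  also have "\<dots> \<le> v\<^sup>2 * (2 * (1 - r))"
    using zero_le_power2[of "1 - r"] by (intro mult_left_mono) (auto simp: power2_eq_square algebra_simps)
  finally have "k * (4 * x) \<le> k * (v\<^sup>2 * (2 * (1 - r)))"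
    by (rule mult_left_mono) simp
  then have "2 * k * x \<le> k * v\<^sup>2 * (1 - r)"
    by (simp add: algebra_simps)
  then have "x\<^sup>2 + 2 * n * x + 1 \<le> v\<^sup>2 * (1 + k * (1 - r))"
    using v_ge Suc by (simp add: power2_eq_square algebra_simps)
  then have "r ^ k * (x\<^sup>2 + 2 * n * x + 1) \<le> r ^ k * (v\<^sup>2 * (1 + k * (1 - r)))"
    using r by (intro mult_left_mono) auto
  also have "\<dots> = v\<^sup>2 * (r ^ k * (1 + k * (1 - r)))"
    by (simp only: ac_simps)
  also have "\<dots> \<le> v\<^sup>2"
    using power_mult_Bernoulli_le_one[OF r] by (simp add: mult_left_le)
  finally have "n * (r ^ k * (x\<^sup>2 + 2 * n * x + 1)) \<le> n * v\<^sup>2"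
    by (rule mult_left_mono) simp
  moreover have "0 < x\<^sup>2 + 2 * n * x + 1"
    using \<open>0 < x\<close> by (simp add: add_pos_nonneg)
  ultimately have "n * r ^ k * 2 / v\<^sup>2 \<le> 2 * n / (x\<^sup>2 + 2 * n * x + 1)"
    using \<open>0 < v\<close> by (simp add: divide_simps)
  moreover have "n - 1 = k"
    using Suc by simp
  ultimately show ?thesis
    by (simp add: norm_mult norm_divide norm_power r_def u_def v_def x_def)
qed simp

lemma Cayley_power_holomorphic_on_cplus:
  "(\<lambda>z. ((z - 1) / (z + 1)) ^ n) holomorphic_on cplus"
proof -
  have "z \<noteq> -1" if "z \<in> cplus" for z
    using that by (auto simp: cplus_def)
  then show ?thesis
    using Cayley_power_has_field_derivative by (auto simp: holomorphic_on_open[OF open_cplus])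
qed

lemma norm_Cayley_power_le_one:
  fixes z :: complex
  assumes "0 \<le> Re z"
  shows "norm (((z - 1) / (z + 1)) ^ n) \<le> 1"
  using assms norm_minus_one_le_norm_plus_one[OF assms]
  by (auto simp: norm_power norm_divide divide_le_eq power_le_one)

lemma norm_deriv_Cayley_power_le:
  fixes z :: complex
  assumes "0 < Re z"
  shows "norm (deriv (\<lambda>z. ((z - 1) / (z + 1)) ^ n) z) \<le> 2 * n / ((Re z)\<^sup>2 + 2 * n * Re z + 1)"
proof -
  have "z \<noteq> -1"
    using assms by auto
  then show ?thesis
    using norm_Cayley_power_derivative_le[OF assms]
    by (simp add: DERIV_imp_deriv[OF Cayley_power_has_field_derivative])
qed

lemma sup_deriv_measurable:
  assumes hol: "f holomorphic_on cplus"
    and bdd: "\<And>x. 0 < x \<Longrightarrow> bdd_above (range (\<lambda>y. norm (deriv f (Complex x y))))"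
  shows "sup_deriv f \<in> borel_measurable (lebesgue_on {0<..})"
proof -
  have deriv_cont: "continuous_on cplus (deriv f)"
    using holomorphic_deriv[OF hol open_cplus] by (rule holomorphic_on_imp_continuous_on)
  have cont: "continuous_on A (\<lambda>x. norm (deriv f (Complex (p x) (q x))))"
    if "continuous_on A p" "continuous_on A q" "\<And>x. x \<in> A \<Longrightarrow> 0 < p x" for A p q
  proof (rule continuous_on_norm)
    show "continuous_on A (\<lambda>x. deriv f (Complex (p x) (q x)))"
      by (rule continuous_on_compose2[OF deriv_cont continuous_on_Complex[OF that(1,2)]])
        (use that(3) in auto)
  qed
  have SUP_Rats_measurable:
    "(\<lambda>x. SUP y\<in>\<rat>. norm (deriv f (Complex x y))) \<in> borel_measurable (lebesgue_on {0<..})"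
  proof (rule borel_measurable_cSUP)
    show "(\<lambda>x. norm (deriv f (Complex x y))) \<in> borel_measurable (lebesgue_on {0<..})" for y
      using cont[of "{0<..}" "\<lambda>x. x" "\<lambda>_. y"]
      by (intro continuous_imp_measurable_on_sets_lebesgue) auto
    show "bdd_above ((\<lambda>y. norm (deriv f (Complex x y))) ` \<rat>)" if "x \<in> space (lebesgue_on {0<..})" for x
      using bdd[of x] that by (auto intro: bdd_above_mono)
  qed (rule countable_rat)
  have "sup_deriv f x = (SUP y\<in>\<rat>. norm (deriv f (Complex x y)))" if "0 < x" for x
    unfolding sup_deriv_def
    using that bdd[OF that] cont[of UNIV "\<lambda>_. x" "\<lambda>y. y"]
    by (intro cSUP_eq_cSUP_Rats) auto
  then show ?thesis
    by (intro measurable_cong[THEN iffD2, OF _ SUP_Rats_measurable]) simp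
qed

lemma in_B_and_B_norm_le:
  assumes hol: "f holomorphic_on cplus"
    and f_le: "\<And>z. z \<in> cplus \<Longrightarrow> norm (f z) \<le> M"
    and deriv_le: "\<And>x y. 0 < x \<Longrightarrow> norm (deriv f (Complex x y)) \<le> g x"
    and g: "(g has_integral I) {0<..}"
  shows "in_B f \<and> B_norm f \<le> M + I"
proof -
  have bdd: "bdd_above (range (\<lambda>y. norm (deriv f (Complex x y))))" if "0 < x" for x
    using deriv_le[OF that] by (intro bdd_aboveI) auto
  have sup_deriv_nonneg: "0 \<le> sup_deriv f x" if "0 < x" for x
    unfolding sup_deriv_def using bdd[OF that] by (meson cSUP_upper2 norm_ge_zero UNIV_I)
  have sup_deriv_le: "sup_deriv f x \<le> g x" if "0 < x" for x
    unfolding sup_deriv_def using deriv_le[OF that] by (intro cSUP_least) auto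
  have integrable: "sup_deriv f integrable_on {0<..}"
  proof (rule measurable_bounded_by_integrable_imp_integrable)
    show "sup_deriv f \<in> borel_measurable (lebesgue_on {0<..})"
      using hol bdd by (rule sup_deriv_measurable)
    show "g integrable_on {0<..}"
      using g by blast
    show "norm (sup_deriv f x) \<le> g x" if "x \<in> {0<..}" for x
      using that sup_deriv_nonneg sup_deriv_le by simp
  qed simp
  have "(SUP z\<in>cplus. norm (f z)) \<le> M"
    using f_le by (intro cSUP_least) (auto simp: cplus_def intro: exI[of _ 1])
  moreover have "integral {0<..} (sup_deriv f) \<le> I"
    using sup_deriv_le by (intro has_integral_le[OF integrable_integral[OF integrable] g]) simp
  ultimately have "B_norm f \<le> M + I"
    unfolding B_norm_def by linarith
  moreover have "in_B f"
    unfolding in_B_def using hol f_le bdd integrable by (auto simp: bounded_iff)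
  ultimately show ?thesis by simp
qed

theorem lemma3p7:
  fixes n :: nat
  assumes "n \<ge> 1"
  shows "in_B (\<lambda>z. ((z - 1) / (z + 1)) ^ n)
         \<and> B_norm (\<lambda>z. ((z - 1) / (z + 1)) ^ n) \<le> 3 + 2 * ln (2 * real n)"
proof -
  define t :: real where "t = 2 * n"
  have "2 \<le> t"
    using assms by (simp add: t_def)
  then have "0 < t" "2 < t\<^sup>2"
    using mult_mono[OF \<open>2 \<le> t\<close> \<open>2 \<le> t\<close>] by (simp_all add: power2_eq_square)
  then have "0 < 1 / t" "1 / t < t - 1 / t"
    by (simp_all add: field_simps power2_eq_square)
  have "norm (deriv (\<lambda>z. ((z - 1) / (z + 1)) ^ n) (Complex x y))
          \<le> t * (1 / ((x + 1 / t) * (x + (t - 1 / t))))" if "0 < x" for x y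
    using norm_deriv_Cayley_power_le[of "Complex x y" n] that
      divide_quadratic_le_divide_shifted_product[OF that \<open>0 < t\<close> \<open>2 < t\<^sup>2\<close>]
    by (simp add: t_def)
  moreover have "((\<lambda>x. t * (1 / ((x + 1 / t) * (x + (t - 1 / t))))) has_integral
                   t * (ln ((t - 1 / t) / (1 / t)) / (t - 1 / t - 1 / t))) {0<..}"
    by (intro has_integral_mult_right has_integral_inverse_shifted_product) fact+
  ultimately have "in_B (\<lambda>z. ((z - 1) / (z + 1)) ^ n) \<and> B_norm (\<lambda>z. ((z - 1) / (z + 1)) ^ n)
                     \<le> 1 + t * (ln ((t - 1 / t) / (1 / t)) / (t - 1 / t - 1 / t))"
    using Cayley_power_holomorphic_on_cplus norm_Cayley_power_le_one
    by (intro in_B_and_B_norm_le) (auto simp: cplus_def)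
  then show ?thesis
    using scaled_log_ratio_le[OF \<open>0 < t\<close> \<open>2 < t\<^sup>2\<close>] by (simp add: t_def)
qed

end
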